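(* Let $F : \mathbb{C}^n \to \mathbb{C}^n$ be entire, and suppose the Koopman operator $\mathcal{K}_F g = g\circ F$ is bounded on $H_G(\mathbb{C}^n)$ (with domain all of $H_G(\mathbb{C}^n)$). Then there exist a matrix $A \in \mathbb{C}^{n\times n}$ and a vector $b \in \mathbb{C}^n$ such that $F(z) = Az + b$ for all $z \in \mathbb{C}^n$.
   Context: $H_G(\mathbb{C}^n)$ denotes the RKHS of entire functions on $\mathbb{C}^n$ with reproducing kernel $K_G(z,w) = \exp\!\left(-\tfrac12 \sum_{j=1}^n (z_j - \overline{w_j})^2\right)$. This is the complexified native space of the Gaussian RBF kernel $\exp(-\|x-y\|^2/2)$. Equivalently, $H_G(\mathbb{C}^n) = \{ g(z)e^{-\sum_j z_j^2/2} : g\in F^2(\mathbb{C}^n)\}$, where $F^2(\mathbb{C}^n)$ is the Fock space with kernel $e^{\sum_j \overline{w_j}z_j}$. *)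

theory Defs
  imports "HOL-Analysis.Analysis"
begin

text \<open>Holomorphy of a function of several complex variables: complex Frechet differentiability
  at every point (derivative real-linear and complex-homogeneous).\<close>
definition entire_fun :: "(complex ^ 'n \<Rightarrow> complex) \<Rightarrow> bool" where
  "entire_fun f \<longleftrightarrow>
     (\<forall>z. \<exists>L. (f has_derivative L) (at z) \<and> (\<forall>c v. L (c *s v) = c * L v))"

definition entire_map :: "(complex ^ 'n \<Rightarrow> complex ^ 'n) \<Rightarrow> bool" where
  "entire_map F \<longleftrightarrow> (\<forall>k. entire_fun (\<lambda>z. F z $ k))"

definition KG :: "complex ^ 'n \<Rightarrow> complex ^ 'n \<Rightarrow> complex" where
  "KG z w = exp (- (\<Sum>j\<in>UNIV. (z $ j - cnj (w $ j))^2) / 2)"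

text \<open>Reproducing kernel Hilbert space H(K) of a positive definite kernel K (with K(x,y) = <K_y,K_x>),
  described as usual (Aronszajn): f belongs to H(K) with norm at most c iff
  |sum_i a_i f(x_i)|^2 <= c^2 sum_{i,j} conj(a_i) a_j K(x_j,x_i) for all finite families,
  i.e. iff c^2 K(x,y) - f(x) conj(f(y)) is a positive semidefinite kernel.\<close>
definition rkhs_bound :: "('a \<Rightarrow> 'a \<Rightarrow> complex) \<Rightarrow> ('a \<Rightarrow> complex) \<Rightarrow> real \<Rightarrow> bool" where
  "rkhs_bound K f c \<longleftrightarrow> 0 \<le> c \<and>
     (\<forall>(m::nat) (x::nat \<Rightarrow> 'a) (a::nat \<Rightarrow> complex).
        (cmod (\<Sum>i<m. a i * f (x i)))^2
          \<le> c^2 * Re (\<Sum>i<m. \<Sum>j<m. cnj (a i) * a j * K (x j) (x i)))"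

definition rkhs :: "('a \<Rightarrow> 'a \<Rightarrow> complex) \<Rightarrow> ('a \<Rightarrow> complex) set" where
  "rkhs K = {f. \<exists>c. rkhs_bound K f c}"

definition rkhs_norm :: "('a \<Rightarrow> 'a \<Rightarrow> complex) \<Rightarrow> ('a \<Rightarrow> complex) \<Rightarrow> real" where
  "rkhs_norm K f = Inf {c. rkhs_bound K f c}"

definition HG :: "(complex ^ 'n \<Rightarrow> complex) set" where
  "HG = rkhs KG"

definition koopman_bounded :: "(complex ^ 'n \<Rightarrow> complex ^ 'n) \<Rightarrow> bool" where
  "koopman_bounded F \<longleftrightarrow>
     (\<exists>C. \<forall>g\<in>HG. g \<circ> F \<in> HG \<and> rkhs_norm KG (g \<circ> F) \<le> C * rkhs_norm KG g)"

end

theory Submission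
  imports Defs "HOL-Complex_Analysis.Conformal_Mappings"
begin

text \<open>
  The Gaussian kernel is the Fock kernel \<open>exp \<langle>z, w\<rangle>\<close> rescaled by
  \<open>exp (- z\<^sup>2 / 2)\<close>, hence positive definite, and its section at a real point has
  norm at most 1. Since \<open>|K(u, Re u)| = exp (|Im u|\<^sup>2 / 2)\<close> while evaluation at y
  has norm at most \<open>sqrt |K(y, y)| = exp |Im y|\<^sup>2\<close>, applying the Koopman operator,
  of norm at most C, to the section at \<open>Re F(y)\<close> gives
  \<open>|Im F(y)|\<^sup>2 \<le> 2 log (|C| + 1) + 2 |y|\<^sup>2\<close>. So on every complex line
  \<open>t \<mapsto> F\<^sub>k(t z)\<close> the imaginary part grows at most linearly; by
  Borel-Caratheodory the whole function then grows linearly, and Liouville's theorem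
  makes it affine.
\<close>

definition psd_kernel :: "('a \<Rightarrow> 'a \<Rightarrow> complex) \<Rightarrow> bool" where
  "psd_kernel K \<longleftrightarrow>
     (\<forall>(m::nat) (x::nat \<Rightarrow> 'a) (a::nat \<Rightarrow> complex).
        0 \<le> Re (\<Sum>i<m. \<Sum>j<m. cnj (a i) * a j * K (x j) (x i)))"

lemma psd_kernel_diag_nonneg: "psd_kernel K \<Longrightarrow> 0 \<le> Re (K y y)"
  unfolding psd_kernel_def
  by (elim allE[of _ 1] allE[of _ "\<lambda>_. y"] allE[of _ "\<lambda>_. 1"]) simp

definition cinner :: "complex ^ 'n \<Rightarrow> complex ^ 'n \<Rightarrow> complex" where
  "cinner z w = (\<Sum>k\<in>UNIV. z $ k * cnj (w $ k))"

lemma psd_kernel_cinner_power: "psd_kernel (\<lambda>z w. cinner z w ^ N)"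
  unfolding psd_kernel_def
proof (induction N)
  case 0
  show ?case
  proof (intro allI)
    fix m and x :: "nat \<Rightarrow> complex ^ 'a" and a :: "nat \<Rightarrow> complex"
    have "(\<Sum>i<m. \<Sum>j<m. cnj (a i) * a j * cinner (x j) (x i) ^ 0)
        = cnj (\<Sum>i<m. a i) * (\<Sum>j<m. a j)"
      by (simp add: sum_product)
    also have "\<dots> = (\<Sum>j<m. a j) * cnj (\<Sum>i<m. a i)"
      by (rule mult.commute)
    also have "\<dots> = of_real ((cmod (\<Sum>j<m. a j))^2)"
      by (rule complex_norm_square[symmetric])
    finally show "0 \<le> Re (\<Sum>i<m. \<Sum>j<m. cnj (a i) * a j * cinner (x j) (x i) ^ 0)"
      by simp
  qed
next
  case (Suc N)
  show ?case
  proof (intro allI)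
    fix m and x :: "nat \<Rightarrow> complex ^ 'a" and a :: "nat \<Rightarrow> complex"
    have "(\<Sum>i<m. \<Sum>j<m. cnj (a i) * a j * cinner (x j) (x i) ^ Suc N)
        = (\<Sum>i<m. \<Sum>j<m. \<Sum>k\<in>UNIV.
             cnj (a i * x i $ k) * (a j * x j $ k) * cinner (x j) (x i) ^ N)"
      by (simp add: cinner_def sum_distrib_left sum_distrib_right mult_ac)
    also have "\<dots> = (\<Sum>k\<in>UNIV. \<Sum>i<m. \<Sum>j<m.
             cnj (a i * x i $ k) * (a j * x j $ k) * cinner (x j) (x i) ^ N)"
      by (subst sum.swap) (rule sum.cong[OF refl], rule sum.swap)
    finally have expand: "(\<Sum>i<m. \<Sum>j<m. cnj (a i) * a j * cinner (x j) (x i) ^ Suc N) = \<dots>" .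
    show "0 \<le> Re (\<Sum>i<m. \<Sum>j<m. cnj (a i) * a j * cinner (x j) (x i) ^ Suc N)"
      unfolding expand by (subst Re_sum) (rule sum_nonneg, rule Suc.IH[rule_format])
  qed
qed

lemma psd_kernel_scaleR:
  assumes "psd_kernel K" and "0 \<le> c"
  shows "psd_kernel (\<lambda>x y. of_real c * K x y)"
  unfolding psd_kernel_def
proof (intro allI)
  fix m and x :: "nat \<Rightarrow> 'a" and a :: "nat \<Rightarrow> complex"
  have "(\<Sum>i<m. \<Sum>j<m. cnj (a i) * a j * (of_real c * K (x j) (x i)))
      = of_real c * (\<Sum>i<m. \<Sum>j<m. cnj (a i) * a j * K (x j) (x i))"
    by (simp add: sum_distrib_left mult_ac)
  then show "0 \<le> Re (\<Sum>i<m. \<Sum>j<m. cnj (a i) * a j * (of_real c * K (x j) (x i)))"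
    using assms unfolding psd_kernel_def by simp
qed

lemma psd_kernel_suminf:
  assumes psd: "\<And>N. psd_kernel (K N)" and summable: "\<And>x y. summable (\<lambda>N. K N x y)"
  shows "psd_kernel (\<lambda>x y. \<Sum>N. K N x y)"
  unfolding psd_kernel_def
proof (intro allI)
  fix m and x :: "nat \<Rightarrow> 'a" and a :: "nat \<Rightarrow> complex"
  define Q where "Q N = (\<Sum>i<m. \<Sum>j<m. cnj (a i) * a j * K N (x j) (x i))" for N
  have summable_Q: "summable Q"
    unfolding Q_def by (intro summable_sum summable_mult summable)
  have "(\<Sum>i<m. \<Sum>j<m. cnj (a i) * a j * (\<Sum>N. K N (x j) (x i))) = (\<Sum>N. Q N)"
    unfolding Q_def
    by (simp add: suminf_mult[OF summable] suminf_sum summable_sum summable_mult summable)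
  moreover have "0 \<le> Re (\<Sum>N. Q N)"
    using summable_Q psd unfolding psd_kernel_def Q_def
    by (simp add: Re_suminf suminf_nonneg summable_Re del: Re_sum)
  ultimately show "0 \<le> Re (\<Sum>i<m. \<Sum>j<m. cnj (a i) * a j * (\<Sum>N. K N (x j) (x i)))"
    by simp
qed

lemma psd_kernel_exp_cinner: "psd_kernel (\<lambda>z w. exp (cinner z w))"
proof -
  have "psd_kernel (\<lambda>z w. \<Sum>N. of_real (1 / fact N) * cinner z w ^ N)"
    by (intro psd_kernel_suminf psd_kernel_scaleR psd_kernel_cinner_power)
      (use summable_exp in \<open>simp_all add: scaleR_conv_of_real divide_inverse mult.commute\<close>)
  then show ?thesis
    by (simp add: exp_def scaleR_conv_of_real divide_inverse mult.commute)
qed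

lemma psd_kernel_conj_rescale:
  assumes "psd_kernel K"
  shows "psd_kernel (\<lambda>x y. h x * cnj (h y) * K x y)"
  unfolding psd_kernel_def
proof (intro allI)
  fix m and x :: "nat \<Rightarrow> 'a" and a :: "nat \<Rightarrow> complex"
  have "0 \<le> Re (\<Sum>i<m. \<Sum>j<m. cnj (a i * h (x i)) * (a j * h (x j)) * K (x j) (x i))"
    using assms unfolding psd_kernel_def
    by (elim allE[of _ m] allE[of _ x] allE[of _ "\<lambda>i. a i * h (x i)"])
  also have "(\<Sum>i<m. \<Sum>j<m. cnj (a i * h (x i)) * (a j * h (x j)) * K (x j) (x i))
      = (\<Sum>i<m. \<Sum>j<m. cnj (a i) * a j * (h (x j) * cnj (h (x i)) * K (x j) (x i)))"
    by (simp add: mult_ac)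
  finally show "0 \<le> Re (\<Sum>i<m. \<Sum>j<m. cnj (a i) * a j * (h (x j) * cnj (h (x i)) * K (x j) (x i)))" .
qed

definition gauss :: "complex ^ 'n \<Rightarrow> complex" where
  "gauss z = exp (- (\<Sum>k\<in>UNIV. (z $ k)^2) / 2)"

lemma KG_eq_gauss_exp_cinner: "KG z w = gauss z * cnj (gauss w) * exp (cinner z w)"
proof -
  have "- (\<Sum>k\<in>UNIV. (z $ k - cnj (w $ k))^2) / 2
     = - (\<Sum>k\<in>UNIV. (z $ k)^2) / 2 + - (\<Sum>k\<in>UNIV. (cnj (w $ k))^2) / 2 + cinner z w"
    by (simp add: cinner_def power2_diff sum.distrib sum_subtractf sum_distrib_left field_simps)
  then show ?thesis
    by (simp add: KG_def gauss_def exp_cnj mult_exp_exp)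
qed

lemma psd_kernel_KG: "psd_kernel KG"
  unfolding KG_eq_gauss_exp_cinner[abs_def]
  by (rule psd_kernel_conj_rescale[OF psd_kernel_exp_cinner])

lemma cnj_KG: "cnj (KG z w) = KG w z"
  by (simp add: KG_def exp_cnj power2_commute)

lemma norm_KG:
  "norm (KG z w) = exp ((\<Sum>k\<in>UNIV. (Im (z $ k) + Im (w $ k))^2 - (Re (z $ k) - Re (w $ k))^2) / 2)"
proof -
  have "Re ((z $ k - cnj (w $ k))^2) = (Re (z $ k) - Re (w $ k))^2 - (Im (z $ k) + Im (w $ k))^2" for k
    by (simp add: power2_eq_square)
  then show ?thesis
    by (simp add: KG_def norm_exp_eq_Re Re_divide sum_subtractf flip: sum_negf)
qed

lemma rkhs_bound_kernel_section:
  assumes psd: "psd_kernel K" and herm: "\<And>x y. cnj (K x y) = K y x" and diag: "K w w = 1"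
  shows "rkhs_bound K (\<lambda>z. K z w) 1"
  unfolding rkhs_bound_def
proof (intro conjI allI)
  fix m :: nat and x :: "nat \<Rightarrow> 'a" and a :: "nat \<Rightarrow> complex"
  define S where "S = (\<Sum>i<m. a i * K (x i) w)"
  define Q where "Q = (\<Sum>i<m. \<Sum>j<m. cnj (a i) * a j * K (x j) (x i))"
  \<comment> \<open>Positivity of the form on the family extended by the point w with weight -S.\<close>
  define x' where "x' = x(m := w)"
  define a' where "a' = a(m := - S)"
  have row_w: "(\<Sum>i<m. cnj (a i) * (- S) * K w (x i)) = - S * cnj S"
  proof -
    have "K w (x i) = cnj (K (x i) w)" for i by (simp add: herm)
    then have "(\<Sum>i<m. cnj (a i) * (- S) * K w (x i)) = - S * (\<Sum>i<m. cnj (a i * K (x i) w))"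
      by (simp add: sum_distrib_left mult_ac)
    also have "(\<Sum>i<m. cnj (a i * K (x i) w)) = cnj S"
      by (simp add: S_def)
    finally show ?thesis .
  qed
  have column_w: "(\<Sum>j<m. cnj (- S) * a j * K (x j) w) = - cnj S * S"
    by (simp only: S_def mult.assoc complex_cnj_minus flip: sum_distrib_left)
  have "0 \<le> Re (\<Sum>i<Suc m. \<Sum>j<Suc m. cnj (a' i) * a' j * K (x' j) (x' i))"
    using psd unfolding psd_kernel_def by blast
  also have "(\<Sum>i<Suc m. \<Sum>j<Suc m. cnj (a' i) * a' j * K (x' j) (x' i))
      = Q + (\<Sum>i<m. cnj (a i) * (- S) * K w (x i)) + (\<Sum>j<m. cnj (- S) * a j * K (x j) w)
        + cnj (- S) * (- S) * K w w"
    by (simp add: a'_def x'_def Q_def sum.distrib sum_subtractf sum_negf)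
  also have "\<dots> = Q - of_real ((cmod S)^2)"
    using row_w column_w complex_norm_square[of S] by (simp add: diag mult_ac)
  finally show "(cmod (\<Sum>i<m. a i * K (x i) w))^2 \<le> 1^2 * Re Q"
    by (simp add: S_def)
qed simp

lemma rkhs_norm_le: "rkhs_bound K f c \<Longrightarrow> rkhs_norm K f \<le> c"
  unfolding rkhs_norm_def
  by (rule cInf_lower) (auto intro: bdd_belowI[of _ 0] simp: rkhs_bound_def)

lemma rkhs_norm_nonneg: "f \<in> rkhs K \<Longrightarrow> 0 \<le> rkhs_norm K f"
  unfolding rkhs_norm_def rkhs_def
  by (rule cInf_greatest) (auto simp: rkhs_bound_def)

lemma norm_eval_le_rkhs_norm:
  assumes psd: "psd_kernel K" and f: "f \<in> rkhs K"
  shows "norm (f y) \<le> rkhs_norm K f * sqrt (Re (K y y))"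
proof -
  define R where "R = Re (K y y)"
  have "0 \<le> R"
    using psd_kernel_diag_nonneg[OF psd] by (simp add: R_def)
  have eval_le: "norm (f y) \<le> c * sqrt R" if "rkhs_bound K f c" for c
  proof -
    have "(norm (f y))^2 \<le> c^2 * R"
      using that unfolding rkhs_bound_def R_def
      by (elim conjE allE[of _ 1] allE[of _ "\<lambda>_. y"] allE[of _ "\<lambda>_. 1"]) simp
    then show ?thesis
      using that \<open>0 \<le> R\<close> unfolding rkhs_bound_def
      by (metis real_le_rsqrt real_sqrt_mult real_sqrt_abs abs_of_nonneg norm_ge_zero)
  qed
  show ?thesis
  proof (cases "R = 0")
    case True
    obtain c where "rkhs_bound K f c" using f unfolding rkhs_def by blast
    then show ?thesis using eval_le True R_def by fastforce
  next
    case False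
    with \<open>0 \<le> R\<close> have "0 < sqrt R" by simp
    have "norm (f y) / sqrt R \<le> rkhs_norm K f"
      unfolding rkhs_norm_def
    proof (rule cInf_greatest)
      show "{c. rkhs_bound K f c} \<noteq> {}" using f unfolding rkhs_def by blast
    qed (use eval_le \<open>0 < sqrt R\<close> in \<open>simp add: divide_le_eq\<close>)
    then show ?thesis using \<open>0 < sqrt R\<close> by (simp add: R_def divide_le_eq)
  qed
qed

lemma sum_Im_square_le_norm_square: "(\<Sum>k\<in>UNIV. (Im (y $ k))^2) \<le> (norm (y :: complex ^ 'n))^2"
proof -
  have "(\<Sum>k\<in>UNIV. (Im (y $ k))^2) \<le> (\<Sum>k\<in>UNIV. (norm (y $ k))^2)"
    by (intro sum_mono) (metis abs_Im_le_cmod abs_le_square_iff abs_norm_cancel)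
  also have "\<dots> = (norm y)^2"
    by (simp add: norm_vec_def L2_set_def sum_nonneg)
  finally show ?thesis .
qed

lemma koopman_bounded_Im_growth:
  fixes F :: "complex ^ 'n \<Rightarrow> complex ^ 'n"
  assumes "koopman_bounded F"
  obtains E B where "\<And>y k. \<bar>Im (F y $ k)\<bar> \<le> E + B * norm y" and "0 \<le> B"
proof -
  obtain C where C: "\<And>g. g \<in> HG \<Longrightarrow> g \<circ> F \<in> HG \<and> rkhs_norm KG (g \<circ> F) \<le> C * rkhs_norm KG g"
    using assms unfolding koopman_bounded_def by blast
  define D where "D = \<bar>C\<bar> + 1"
  have "D \<ge> 1" by (simp add: D_def)
  have sum_le: "(\<Sum>k\<in>UNIV. (Im (F y $ k))^2) \<le> 2 * ln D + 2 * (norm y)^2" for y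
  proof -
    \<comment> \<open>Test the Koopman operator on the kernel section at the real point closest to F y.\<close>
    define r :: "complex ^ 'n" where "r = (\<chi> k. of_real (Re (F y $ k)))"
    define g where "g z = KG z r" for z
    have "rkhs_bound KG g 1"
      unfolding g_def
      by (rule rkhs_bound_kernel_section[OF psd_kernel_KG cnj_KG]) (simp add: KG_def r_def)
    then have "g \<in> HG" and "rkhs_norm KG g \<le> 1"
      by (auto simp: HG_def rkhs_def intro: rkhs_norm_le)
    with C have gF: "g \<circ> F \<in> HG" and "rkhs_norm KG (g \<circ> F) \<le> C * rkhs_norm KG g"
      by auto
    moreover have "C * rkhs_norm KG g \<le> D"
      using \<open>rkhs_norm KG g \<le> 1\<close> rkhs_norm_nonneg[of g KG] \<open>g \<in> HG\<close>
      unfolding D_def HG_def by (smt (verit) mult_left_le mult_right_mono abs_ge_self)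
    ultimately have norm_gF: "rkhs_norm KG (g \<circ> F) \<le> D" by linarith
    have "exp ((\<Sum>k\<in>UNIV. (Im (F y $ k))^2) / 2) = norm ((g \<circ> F) y)"
      by (simp add: g_def r_def norm_KG)
    also have "\<dots> \<le> rkhs_norm KG (g \<circ> F) * sqrt (Re (KG y y))"
      using gF unfolding HG_def by (rule norm_eval_le_rkhs_norm[OF psd_kernel_KG])
    also have "\<dots> \<le> D * sqrt (norm (KG y y))"
      using norm_gF gF rkhs_norm_nonneg[of "g \<circ> F" KG]
      by (intro mult_mono real_sqrt_le_mono complex_Re_le_cmod)
        (auto simp: HG_def psd_kernel_diag_nonneg[OF psd_kernel_KG])
    also have "sqrt (norm (KG y y)) = exp (\<Sum>k\<in>UNIV. (Im (y $ k))^2)"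
    proof -
      have "norm (KG y y) = (exp (\<Sum>k\<in>UNIV. (Im (y $ k))^2))^2"
        by (simp add: norm_KG power2_eq_square sum_distrib_left algebra_simps flip: exp_add)
      then show ?thesis by simp
    qed
    also have "D * exp (\<Sum>k\<in>UNIV. (Im (y $ k))^2) \<le> D * exp ((norm y)^2)"
      using \<open>D \<ge> 1\<close> sum_Im_square_le_norm_square[of y] by simp
    also have "\<dots> = exp (ln D + (norm y)^2)"
      using \<open>D \<ge> 1\<close> by (simp add: exp_add)
    finally show ?thesis by simp
  qed
  show thesis
  proof
    show "0 \<le> sqrt 2" by simp
  next
    fix y k
    have "(Im (F y $ k))^2 \<le> (\<Sum>k\<in>UNIV. (Im (F y $ k))^2)"
      by (rule member_le_sum) auto
    then have "\<bar>Im (F y $ k)\<bar> \<le> sqrt (2 * ln D + 2 * (norm y)^2)"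
      using sum_le[of y] by (simp add: real_le_rsqrt)
    also have "\<dots> \<le> sqrt (2 * ln D) + sqrt (2 * (norm y)^2)"
      using \<open>D \<ge> 1\<close> by (intro sqrt_add_le_add_sqrt) auto
    finally show "\<bar>Im (F y $ k)\<bar> \<le> sqrt (2 * ln D) + sqrt 2 * norm y"
      by (simp add: real_sqrt_mult)
  qed
qed

lemma Borel_Caratheodory:
  fixes g :: "complex \<Rightarrow> complex"
  assumes hol: "g holomorphic_on ball 0 R" and g0: "g 0 = 0"
    and Re_less: "\<And>z. norm z < R \<Longrightarrow> Re (g z) < M" and z: "norm z < R"
  shows "norm (g z) * (R - norm z) \<le> 2 * M * norm z"
proof -
  have "0 < R" using z by (meson norm_ge_zero le_less_trans)
  have "0 < M" using Re_less[of 0] g0 \<open>0 < R\<close> by simp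
  have g_ne: "g s \<noteq> 2 * of_real M" if "norm s < R" for s
    using Re_less[OF that] \<open>0 < M\<close> by (auto dest: arg_cong[of _ _ Re])
  \<comment> \<open>The Moebius map u \<mapsto> u / (2M - u) sends the half-plane Re u < M into the unit disc.\<close>
  define w where "w s = g (of_real R * s) / (2 * of_real M - g (of_real R * s))" for s
  have scaled_in_ball: "norm (of_real R * s) < R" if "norm s < 1" for s :: complex
    using that \<open>0 < R\<close> by (simp add: norm_mult)
  have den_ne: "2 * of_real M - g (of_real R * s) \<noteq> 0" if "norm s < 1" for s
    using g_ne[OF scaled_in_ball[OF that]] by simp
  have w_hol: "w holomorphic_on ball 0 1"
    unfolding w_def using den_ne
    by (intro holomorphic_intros holomorphic_on_compose_gen[OF _ hol, unfolded o_def])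
      (auto simp: scaled_in_ball)
  have w_less: "norm (w s) < 1" if "norm s < 1" for s
  proof -
    let ?u = "g (of_real R * s)"
    have "(norm ?u)^2 < (norm (2 * of_real M - ?u))^2"
      using Re_less[OF scaled_in_ball[OF that]] \<open>0 < M\<close> unfolding cmod_power2
      by (simp add: power2_eq_square algebra_simps)
    then have "norm ?u < norm (2 * of_real M - ?u)"
      by (meson norm_ge_zero power_less_imp_less_base)
    then show ?thesis
      using g_ne[OF scaled_in_ball[OF that]] by (simp add: w_def norm_divide divide_less_eq)
  qed
  have "norm (z / of_real R) < 1" using z \<open>0 < R\<close> by (simp add: norm_divide)
  moreover have "w 0 = 0" using g0 by (simp add: w_def)
  ultimately have "norm (w (z / of_real R)) \<le> norm (z / of_real R)"
    using Schwarz_Lemma(1)[OF w_hol _ w_less] by blast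
  then have "norm (g z) \<le> norm z / R * norm (2 * of_real M - g z)"
    using g_ne[OF z] \<open>0 < R\<close> by (simp add: w_def norm_divide divide_le_eq field_simps)
  also have "\<dots> \<le> norm z / R * (2 * M + norm (g z))"
    using norm_triangle_ineq4[of "2 * of_real M" "g z"] \<open>0 < M\<close> \<open>0 < R\<close>
    by (intro mult_left_mono) (auto simp: norm_mult)
  finally show ?thesis
    using \<open>0 < R\<close> by (simp add: field_simps)
qed

lemma entire_affine_of_Im_linear_growth:
  fixes f :: "complex \<Rightarrow> complex"
  assumes hol: "f holomorphic_on UNIV"
    and Im_le: "\<And>t. \<bar>Im (f t)\<bar> \<le> A + B * norm t" and "0 \<le> B"
  shows "f t = f 0 + deriv f 0 * t"
proof -
  have "0 \<le> A" using Im_le[of 0] by simp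
  define g where "g t = - \<i> * (f t - f 0)" for t
  have g_hol: "g holomorphic_on UNIV" unfolding g_def by (intro holomorphic_intros hol)
  have Re_g_le: "Re (g t) \<le> 2 * A + B * norm t" for t
    using Im_le[of t] Im_le[of 0] by (simp add: g_def abs_le_iff)
  have g_le: "norm (g t) \<le> (4 * A + 2 + 4 * B) * norm t ^ 1" if "1 \<le> norm t" for t
  proof -
    define M where "M = 2 * A + 2 * B * norm t + 1"
    have "Re (g s) < M" if "norm s < 2 * norm t" for s
      using Re_g_le[of s] that \<open>0 \<le> B\<close> mult_left_mono[OF less_imp_le[OF that] \<open>0 \<le> B\<close>]
      by (simp add: M_def)
    then have "norm (g t) * (2 * norm t - norm t) \<le> 2 * M * norm t"
      using \<open>1 \<le> norm t\<close>
      by (intro Borel_Caratheodory[OF holomorphic_on_subset[OF g_hol]]) (auto simp: g_def)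
    then have "norm (g t) \<le> 2 * M"
      using \<open>1 \<le> norm t\<close> by (auto simp: mult_le_cancel_right)
    also have "\<dots> \<le> (4 * A + 2 + 4 * B) * norm t"
      using \<open>1 \<le> norm t\<close> mult_left_mono[OF \<open>1 \<le> norm t\<close> \<open>0 \<le> A\<close>]
      by (simp add: M_def algebra_simps)
    finally show ?thesis by simp
  qed
  have g_lin: "g s = deriv g 0 * s" for s
  proof -
    have "g s = (\<Sum>k\<le>1. (deriv ^^ k) g 0 / fact k * s ^ k)"
      by (rule Liouville_polynomial[OF g_hol g_le])
    moreover have "g 0 = 0" by (simp add: g_def)
    ultimately show ?thesis by simp
  qed
  have f_via_g: "f s = f 0 + \<i> * g s" for s
    by (simp add: g_def algebra_simps)
  have f_eq: "f = (\<lambda>s. f 0 + \<i> * deriv g 0 * s)"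
  proof
    show "f s = f 0 + \<i> * deriv g 0 * s" for s
      using f_via_g[of s] g_lin[of s] by (simp add: mult.assoc)
  qed
  have "deriv f 0 = \<i> * deriv g 0"
    by (subst f_eq) (auto intro!: DERIV_imp_deriv derivative_eq_intros)
  then show ?thesis by (subst f_eq) simp
qed

lemma has_field_derivative_along_line:
  fixes h :: "complex ^ 'n \<Rightarrow> complex"
  assumes "(h has_derivative L) (at (t0 *s z))" and "\<And>c v. L (c *s v) = c * L v"
  shows "((\<lambda>t. h (t *s z)) has_field_derivative L z) (at t0)"
proof -
  have "linear (\<lambda>t::complex. t *s z)"
    by (rule linearI) (simp_all add: vec_eq_iff algebra_simps)
  then have "((\<lambda>t. t *s z) has_derivative (\<lambda>t. t *s z)) (at t0)"
    by (rule linear_imp_has_derivative)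
  then have "((\<lambda>t. h (t *s z)) has_derivative (\<lambda>t. L (t *s z))) (at t0)"
    using has_derivative_compose assms(1) by fastforce
  moreover have "(\<lambda>t. L (t *s z)) = (*) (L z)"
    using assms(2) by (auto simp: fun_eq_iff mult.commute)
  ultimately show ?thesis by (simp add: has_field_derivative_def)
qed

lemma norm_vector_scalar_mult: "norm (t *s z) = norm t * norm (z :: complex ^ 'n)"
  by (simp add: norm_vec_def norm_mult L2_set_right_distrib)

lemma entire_fun_affine_of_Im_linear_growth:
  fixes h :: "complex ^ 'n \<Rightarrow> complex"
  assumes ent: "entire_fun h" and Im_le: "\<And>y. \<bar>Im (h y)\<bar> \<le> E + B * norm y" and "0 \<le> B"
  obtains c :: "complex ^ 'n" where "\<And>z. h z = h 0 + (\<Sum>j\<in>UNIV. c $ j * z $ j)"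
proof -
  obtain L where L: "(h has_derivative L) (at 0)" and L_hom: "\<And>c v. L (c *s v) = c * L v"
    using ent unfolding entire_fun_def by blast
  have h_eq: "h z = h 0 + L z" for z
  proof -
    define f where "f t = h (t *s z)" for t
    have "f holomorphic_on UNIV"
      unfolding holomorphic_on_def field_differentiable_def f_def
      using ent has_field_derivative_along_line unfolding entire_fun_def by blast
    moreover have "\<bar>Im (f t)\<bar> \<le> E + (B * norm z) * norm t" for t
      using Im_le[of "t *s z"] by (simp add: f_def norm_vector_scalar_mult mult_ac)
    ultimately have "f 1 = f 0 + deriv f 0 * 1"
      using \<open>0 \<le> B\<close> by (intro entire_affine_of_Im_linear_growth[where B = "B * norm z"]) auto
    moreover have "deriv f 0 = L z"
      unfolding f_def
      by (intro DERIV_imp_deriv has_field_derivative_along_line) (use L L_hom in simp_all)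
    ultimately show ?thesis by (simp add: f_def)
  qed
  have "linear L" using L by (rule has_derivative_linear)
  have L_eq: "L z = (\<Sum>j\<in>UNIV. L (axis j 1) * z $ j)" for z
  proof -
    have "L z = L (\<Sum>j\<in>UNIV. z $ j *s axis j 1)" by (simp add: basis_expansion)
    also have "\<dots> = (\<Sum>j\<in>UNIV. L (axis j 1) * z $ j)"
      by (simp add: linear_sum[OF \<open>linear L\<close>] L_hom mult.commute)
    finally show ?thesis .
  qed
  show thesis
  proof (rule that[of "\<chi> j. L (axis j 1)"])
    show "h z = h 0 + (\<Sum>j\<in>UNIV. (\<chi> j. L (axis j 1)) $ j * z $ j)" for z
      using h_eq[of z] L_eq[of z] by simp
  qed
qed

theorem theorem1:
  fixes F :: "complex ^ 'n \<Rightarrow> complex ^ 'n"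
  assumes "entire_map F"
    and "koopman_bounded F"
  shows "\<exists>(A :: complex ^ 'n ^ 'n) (b :: complex ^ 'n). \<forall>z. F z = A *v z + b"
proof -
  obtain E B where Im_le: "\<And>y k. \<bar>Im (F y $ k)\<bar> \<le> E + B * norm y" and "0 \<le> B"
    using koopman_bounded_Im_growth[OF assms(2)] by metis
  have "\<exists>c :: complex ^ 'n. \<forall>z. F z $ k = F 0 $ k + (\<Sum>j\<in>UNIV. c $ j * z $ j)" for k
  proof -
    have "entire_fun (\<lambda>z. F z $ k)" using assms(1) by (simp add: entire_map_def)
    from entire_fun_affine_of_Im_linear_growth[OF this Im_le \<open>0 \<le> B\<close>]
    show ?thesis by metis
  qed
  then obtain c where c: "\<And>k z. F z $ k = F 0 $ k + (\<Sum>j\<in>UNIV. c k $ j * z $ j)"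
    by metis
  have "F z = (\<chi> k j. c k $ j) *v z + F 0" for z
    by (simp add: vec_eq_iff matrix_vector_mult_def c[where z = z])
  then show ?thesis by blast
qed

end
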